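(* Let $p=\sum_{i=0}^n c_iT^i$ be a polynomial of degree $n\ge1$ over $\mathbb T$, and let $a_1\le\dots\le a_n$ be the unique elements of $\mathbb T$ with $c_n^{-1}p\in\boxdot_{i=1}^n(T+a_i)$. Let $a\ne0$ be one of the $a_i$, and let $k\in\{1,\dots,n\}$ and $m\ge1$ be such that $a=a_k=\dots=a_{k+m-1}$, $a_{k-1}<a_k$ if $k\ge2$, and $a_{k+m-1}<a_{k+m}$ if $k+m\le n$. Define $d_0,\dots,d_{n-1}\in\mathbb T$ by: (1) if $k\le n-m$: $d_{n-1}=c_n$ and, for $i=n-2,n-3,\dots,k+m-1$ (in decreasing order), $d_i=\max\{c_{i+1},ad_{i+1}\}$; (2) if $k\ge2$: $d_0=a^{-1}c_0$ and, for $i=1,\dots,k-2$ (in increasing order), $d_i=\max\{a^{-1}c_i,a^{-1}d_{i-1}\}$; (3) for $i=k-1,\dots,k+m-2$: $d_i=a_{i+2}a_{i+3}\cdots a_nc_n$ (an empty product being $1$). Then $q=\sum_{i=0}^{n-1}d_iT^i$ satisfies $p\in(T+a)\boxdot q$, i.e. $c_n=d_{n-1}$, $c_0=ad_0$, and $c_i\in (ad_i)\boxplus d_{i-1}$ for $i=1,\dots,n-1$.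
   Context: The tropical hyperfield $\mathbb T$ is $\mathbb R_{\ge0}$ with usual multiplication and hyperaddition $a\boxplus b=\{\max\{a,b\}\}$ if $a\ne b$, $a\boxplus a=[0,a]$ (so $c\in a\boxplus b$ iff the maximum of $a,b,c$ is attained at least twice; $-a=a$). Iterated sums: $\boxplus_{i=1}^n a_i=\bigcup_{b\in\boxplus_{i=1}^{n-1}a_i} b\boxplus a_n$. A polynomial over $\mathbb T$ is a finitely supported sequence $(c_i)$, written $\sum c_iT^i$. Hyperproduct: $p\boxdot q=\{\sum e_iT^i : e_i\in \boxplus_{k+l=i} c_kd_l\}$, and $\boxdot_{i=1}^n q_i=\bigcup_{r\in\boxdot_{i=1}^{n-1}q_i} r\boxdot q_n$. Known fact (fundamental theorem for $\mathbb T$): for monic $p$ of degree $n$ there is a unique sequence $a_1\le\dots\le a_n$ in $\mathbb T$ with $p\in\boxdot_{i=1}^n(T+a_i)$; this holds iff $c_i\le a_{i+1}\cdots a_n$ for all $i=0,\dots,n-1$ with equality whenever $a_i<a_{i+1}$ (for $i\ge1$) or $i=0$ and $a_0$ is not defined—precisely: $c_0=a_1\cdots a_n$ and $c_i=a_{i+1}\cdots a_n$ when $a_i<a_{i+1}$; the roots of $p$ are exactly $a_1,\dots,a_n$. *)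

theory Defs
  imports Main "HOL.Real"
begin

text \<open>Tropical hyperfield T: elements are reals \<ge> 0 (nonnegativity imposed by hypotheses).
  Hyperaddition a \<boxplus> b.\<close>
definition tplus :: "real \<Rightarrow> real \<Rightarrow> real set" where
  "tplus x y = (if x \<noteq> y then {max x y} else {0..x})"

text \<open>Iterated hypersum of a list (left to right); the empty sum is {0}
  (so 0 \<boxplus> a1 = {a1} and the iteration agrees with the paper's).\<close>
definition tsumL :: "real list \<Rightarrow> real set" where
  "tsumL xs = foldl (\<lambda>S x. \<Union>b\<in>S. tplus b x) {0} xs"

text \<open>Polynomials over T are coefficient sequences nat \<Rightarrow> real (finitely supported).
  Hyperproduct of two polynomials.\<close>
definition hmul :: "(nat \<Rightarrow> real) \<Rightarrow> (nat \<Rightarrow> real) \<Rightarrow> (nat \<Rightarrow> real) set" where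
  "hmul p q = {e. \<forall>i. e i \<in> tsumL (map (\<lambda>k. p k * q (i - k)) [0..<Suc i])}"

definition tone :: "nat \<Rightarrow> real" where
  "tone i = (if i = 0 then 1 else 0)"

text \<open>Iterated hyperproduct of a list of polynomials (starting from the constant 1,
  for which 1 \<boxdot> q = {q}).\<close>
definition hprodL :: "(nat \<Rightarrow> real) list \<Rightarrow> (nat \<Rightarrow> real) set" where
  "hprodL qs = foldl (\<lambda>S q. \<Union>r\<in>S. hmul r q) {tone} qs"

definition linp :: "real \<Rightarrow> nat \<Rightarrow> real" where
  "linp x i = (if i = 0 then x else if i = 1 then 1 else 0)"

end

theory Submission
  imports Defs
begin

text \<open>
  Let \<open>P i = a (i+1) \<cdots> a n\<close>. Multiplying out the factorization one root at a time
  shows \<open>c i \<le> c n * P i\<close> for all \<open>i\<close>, with equality for \<open>i = 0\<close> and wherever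
  \<open>a i < a (i+1)\<close>, in particular at both ends of the block of \<open>a\<close>.
  Inside the block \<open>d i = c n * P (i+1)\<close>, so \<open>a * d i = d (i-1) \<ge> c i\<close> and the
  maximum of \<open>c i, a * d i, d (i-1)\<close> is attained twice. Below and above the block the
  recursions defining \<open>d\<close> make it a double maximum by construction. At the two edges
  of the block, induction along the recursions gives \<open>d i \<le> c n * P (i+1)\<close> (using
  \<open>a j \<le> a\<close> below and \<open>a \<le> a j\<close> above the block); hence \<open>d (k-2) \<le> a * d (k-1) = c (k-1)\<close>
  at the lower edge and, as \<open>a < a (k+m)\<close>, \<open>a * d (k+m-1) < c (k+m-1) = d (k+m-2)\<close> at
  the upper one.
\<close>

lemma tplus_nonneg: "0 \<le> b \<Longrightarrow> s \<in> tplus b x \<Longrightarrow> 0 \<le> s"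
  by (auto simp: tplus_def split: if_splits)

lemma tplus_le_max: "0 \<le> u \<Longrightarrow> s \<in> tplus u v \<Longrightarrow> s \<le> max u v"
  by (auto simp: tplus_def split: if_splits)

lemma tplus_zero_left: "0 \<le> x \<Longrightarrow> tplus 0 x = {x}"
  by (auto simp: tplus_def)

lemma mem_tplus_same: "s \<in> tplus u u \<longleftrightarrow> 0 \<le> s \<and> s \<le> u"
  by (auto simp: tplus_def)

lemma mem_tplus_less: "x < y \<Longrightarrow> s \<in> tplus x y \<longleftrightarrow> s = y"
  by (auto simp: tplus_def)

lemma mem_tplus_max_left: "0 \<le> s \<Longrightarrow> 0 \<le> y \<Longrightarrow> s \<in> tplus (max s y) y"
  by (auto simp: tplus_def max_def)

lemma mem_tplus_max_right: "0 \<le> s \<Longrightarrow> 0 \<le> x \<Longrightarrow> s \<in> tplus x (max s x)"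
  by (auto simp: tplus_def max_def)

lemma mem_tplus_dominant: "0 \<le> y \<Longrightarrow> y \<le> x \<Longrightarrow> x \<in> tplus x y"
  by (auto simp: tplus_def max_def)

abbreviation tsum_step :: "real set \<Rightarrow> real \<Rightarrow> real set" where
  "tsum_step \<equiv> \<lambda>S x. \<Union>b\<in>S. tplus b x"

lemma foldl_tsum_step_zeros:
  assumes "\<And>x. x \<in> set ys \<Longrightarrow> x = 0" and "\<And>s. s \<in> S \<Longrightarrow> 0 \<le> s"
  shows "foldl tsum_step S ys = S"
  using assms
proof (induction ys arbitrary: S)
  case (Cons y ys)
  then have "y = 0" by simp
  with Cons.prems(2) have "tsum_step S y = S" by (auto simp: tplus_def)
  with Cons show ?case by simp
qed simp

lemma all_nat_split_zero: "(\<forall>i::nat. Q i) \<longleftrightarrow> Q 0 \<and> (\<forall>i\<ge>1. Q i)"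
  by (metis less_one not_le)

lemma hmul_linp_left_iff:
  assumes "0 \<le> x" and "\<And>i. 0 \<le> d i"
  shows "c \<in> hmul (linp x) d \<longleftrightarrow>
    c 0 = x * d 0 \<and> (\<forall>i\<ge>1. c i \<in> tplus (x * d i) (d (i - 1)))"
proof -
  have "tsumL (map (\<lambda>k. linp x k * d (i - k)) [0..<Suc i]) = tplus (x * d i) (d (i - 1))"
    if i1: "1 \<le> i" for i
  proof -
    have upt: "[0..<Suc i] = 0 # 1 # [Suc (Suc 0)..<Suc i]"
      using i1 by (simp add: upt_conv_Cons)
    have "0 \<le> s" if "s \<in> tplus (x * d i) (d (i - 1))" for s
      using that assms tplus_nonneg by (meson mult_nonneg_nonneg)
    then have "foldl tsum_step (tplus (x * d i) (d (i - 1)))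
        (map (\<lambda>k. linp x k * d (i - k)) [Suc (Suc 0)..<Suc i]) = tplus (x * d i) (d (i - 1))"
      by (intro foldl_tsum_step_zeros) (auto simp: linp_def)
    then show ?thesis
      using assms unfolding tsumL_def upt by (simp add: linp_def tplus_zero_left)
  qed
  moreover have "tsumL (map (\<lambda>k. linp x k * d (0 - k)) [0..<Suc 0]) = {x * d 0}"
    using assms by (simp add: tsumL_def linp_def tplus_zero_left)
  ultimately show ?thesis
    unfolding hmul_def mem_Collect_eq by (subst all_nat_split_zero) (simp del: upt_Suc)
qed

lemma hmul_linp_right_iff:
  assumes "0 \<le> x" and "\<And>i. 0 \<le> e i"
  shows "f \<in> hmul e (linp x) \<longleftrightarrow>
    f 0 = e 0 * x \<and> (\<forall>i\<ge>1. f i \<in> tplus (e (i - 1)) (e i * x))"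
proof -
  have "tsumL (map (\<lambda>k. e k * linp x (i - k)) [0..<Suc i]) = tplus (e (i - 1)) (e i * x)"
    if i1: "1 \<le> i" for i
  proof -
    obtain j where i: "i = Suc j" using i1 by (cases i) auto
    have "foldl tsum_step {0} (map (\<lambda>k. e k * linp x (i - k)) [0..<j]) = {0}"
      by (rule foldl_tsum_step_zeros) (auto simp: i linp_def)
    then show ?thesis
      using assms unfolding tsumL_def by (simp add: i linp_def tplus_zero_left)
  qed
  moreover have "tsumL (map (\<lambda>k. e k * linp x (0 - k)) [0..<Suc 0]) = {e 0 * x}"
    using assms by (simp add: tsumL_def linp_def tplus_zero_left)
  ultimately show ?thesis
    unfolding hmul_def mem_Collect_eq by (subst all_nat_split_zero) (simp del: upt_Suc)
qed

lemma hprodL_linp_Suc: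
  "f \<in> hprodL (map (\<lambda>i. linp (a i)) [1..<Suc (Suc n)]) \<longleftrightarrow>
    (\<exists>e \<in> hprodL (map (\<lambda>i. linp (a i)) [1..<Suc n]). f \<in> hmul e (linp (a (Suc n))))"
  by (simp add: hprodL_def)

lemma hprodL_linp_nonneg:
  assumes "\<forall>i\<in>{1..n}. 0 \<le> a i" and "e \<in> hprodL (map (\<lambda>i. linp (a i)) [1..<Suc n])"
  shows "0 \<le> e i"
  using assms
proof (induction n arbitrary: e i)
  case 0
  then show ?case by (simp add: hprodL_def tone_def)
next
  case (Suc n f)
  obtain e where e: "e \<in> hprodL (map (\<lambda>i. linp (a i)) [1..<Suc n])"
    and f: "f \<in> hmul e (linp (a (Suc n)))"
    using Suc.prems(2) hprodL_linp_Suc by blast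
  have "\<And>i. 0 \<le> e i" using Suc.IH[OF _ e] Suc.prems(1) by auto
  moreover have "0 \<le> a (Suc n)" using Suc.prems(1) by auto
  ultimately have "f 0 = e 0 * a (Suc n)" "\<And>i. 1 \<le> i \<Longrightarrow> f i \<in> tplus (e (i - 1)) (e i * a (Suc n))"
    using f by (simp_all add: hmul_linp_right_iff)
  then show ?case
    using \<open>\<And>i. 0 \<le> e i\<close> \<open>0 \<le> a (Suc n)\<close>
    by (cases i) (simp, metis le_add1 plus_1_eq_Suc tplus_nonneg)
qed

lemma hprodL_linp_SucE:
  assumes "\<forall>i\<in>{1..Suc n}. 0 \<le> a i"
    and "f \<in> hprodL (map (\<lambda>i. linp (a i)) [1..<Suc (Suc n)])"
  obtains e where "e \<in> hprodL (map (\<lambda>i. linp (a i)) [1..<Suc n])"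
    and "f 0 = e 0 * a (Suc n)"
    and "\<And>i. 1 \<le> i \<Longrightarrow> f i \<in> tplus (e (i - 1)) (e i * a (Suc n))"
proof -
  obtain e where e: "e \<in> hprodL (map (\<lambda>i. linp (a i)) [1..<Suc n])"
    and f: "f \<in> hmul e (linp (a (Suc n)))"
    using assms(2) hprodL_linp_Suc by blast
  have "\<And>i. 0 \<le> e i" using hprodL_linp_nonneg[OF _ e] assms(1) by auto
  moreover have "0 \<le> a (Suc n)" using assms(1) by auto
  ultimately show thesis
    using that[OF e] f by (simp add: hmul_linp_right_iff)
qed

lemma hprodL_linp_monic:
  assumes "\<forall>i\<in>{1..n}. 0 \<le> a i" and "e \<in> hprodL (map (\<lambda>i. linp (a i)) [1..<Suc n])"
  shows "e n = 1 \<and> (\<forall>i>n. e i = 0)"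
  using assms
proof (induction n arbitrary: e)
  case 0
  then show ?case by (simp add: hprodL_def tone_def)
next
  case (Suc n f)
  obtain e where e: "e \<in> hprodL (map (\<lambda>i. linp (a i)) [1..<Suc n])"
    and fi: "\<And>i. 1 \<le> i \<Longrightarrow> f i \<in> tplus (e (i - 1)) (e i * a (Suc n))"
    using Suc.prems by (rule hprodL_linp_SucE) blast
  have IH: "e n = 1 \<and> (\<forall>i>n. e i = 0)" using Suc.IH[OF _ e] Suc.prems(1) by auto
  show ?case
  proof (intro conjI allI impI)
    show "f (Suc n) = 1" using fi[of "Suc n"] IH by (simp add: tplus_def)
  next
    fix i assume "Suc n < i"
    then have "f i \<in> tplus 0 0" using fi[of i] IH by simp
    then show "f i = 0" by (simp add: tplus_def)
  qed
qed

lemma hprodL_linp_coeff_zero: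
  assumes "\<forall>i\<in>{1..n}. 0 \<le> a i" and "e \<in> hprodL (map (\<lambda>i. linp (a i)) [1..<Suc n])"
  shows "e 0 = prod a {1..n}"
  using assms
proof (induction n arbitrary: e)
  case 0
  then show ?case by (simp add: hprodL_def tone_def)
next
  case (Suc n f)
  obtain e where "e \<in> hprodL (map (\<lambda>i. linp (a i)) [1..<Suc n])"
    and "f 0 = e 0 * a (Suc n)"
    using Suc.prems by (rule hprodL_linp_SucE) blast
  with Suc show ?case by (simp add: prod.cl_ivl_Suc)
qed

lemma hprodL_linp_coeff_le:
  assumes "\<forall>i\<in>{1..n}. 0 \<le> a i" and "mono_on {1..n} a"
    and "e \<in> hprodL (map (\<lambda>i. linp (a i)) [1..<Suc n])" and "i \<le> n"
  shows "e i \<le> prod a {Suc i..n}"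
  using assms
proof (induction n arbitrary: e i)
  case 0
  then show ?case by (simp add: hprodL_def tone_def)
next
  case (Suc n f)
  let ?x = "a (Suc n)"
  obtain e where e: "e \<in> hprodL (map (\<lambda>i. linp (a i)) [1..<Suc n])"
    and fi: "\<And>i. 1 \<le> i \<Longrightarrow> f i \<in> tplus (e (i - 1)) (e i * ?x)"
    using Suc.prems(1,3) by (rule hprodL_linp_SucE) blast
  have a_nonneg: "\<forall>i\<in>{1..n}. 0 \<le> a i" and a_mono: "mono_on {1..n} a"
    using Suc.prems(1,2) by (auto intro: mono_on_subset)
  consider "i = 0" | "i = Suc n" | "1 \<le> i" "i \<le> n"
    using Suc.prems(4) by linarith
  then show ?case
  proof cases
    case 1
    then show ?thesis
      using hprodL_linp_coeff_zero[OF Suc.prems(1,3)] by simp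
  next
    case 2
    then show ?thesis using hprodL_linp_monic[OF Suc.prems(1,3)] by simp
  next
    case 3
    have tail_nonneg: "0 \<le> prod a {Suc i..n}" using a_nonneg by (auto intro: prod_nonneg)
    have "e (i - 1) \<le> prod a {i..n}"
      using Suc.IH[OF a_nonneg a_mono e, of "i - 1"] 3 by simp
    also have "\<dots> = a i * prod a {Suc i..n}" using 3 by (simp add: prod.atLeast_Suc_atMost)
    also have "\<dots> \<le> ?x * prod a {Suc i..n}"
      using 3 mono_onD[OF Suc.prems(2), of i "Suc n"] tail_nonneg by (simp add: mult_right_mono)
    finally have left: "e (i - 1) \<le> ?x * prod a {Suc i..n}" .
    have "e i * ?x \<le> prod a {Suc i..n} * ?x"
      using Suc.IH[OF a_nonneg a_mono e, of i] 3 Suc.prems(1) by (auto intro: mult_right_mono)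
    with left have "max (e (i - 1)) (e i * ?x) \<le> ?x * prod a {Suc i..n}"
      by (simp add: mult.commute)
    moreover have "f i \<le> max (e (i - 1)) (e i * ?x)"
      using fi[of i] 3 hprodL_linp_nonneg[OF a_nonneg e] by (auto intro: tplus_le_max)
    ultimately have "f i \<le> ?x * prod a {Suc i..n}" by linarith
    then show ?thesis using 3 by (simp add: prod.cl_ivl_Suc mult.commute)
  qed
qed

lemma hprodL_linp_coeff_eq:
  assumes "\<forall>i\<in>{1..n}. 0 \<le> a i" and "mono_on {1..n} a"
    and "e \<in> hprodL (map (\<lambda>i. linp (a i)) [1..<Suc n])"
    and "1 \<le> i" and "i < n" and "a i < a (Suc i)"
  shows "e i = prod a {Suc i..n}"
  using assms
proof (induction n arbitrary: e)
  case 0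
  then show ?case by simp
next
  case (Suc n f)
  let ?x = "a (Suc n)"
  obtain e where e: "e \<in> hprodL (map (\<lambda>i. linp (a i)) [1..<Suc n])"
    and fi: "\<And>i. 1 \<le> i \<Longrightarrow> f i \<in> tplus (e (i - 1)) (e i * ?x)"
    using Suc.prems(1,3) by (rule hprodL_linp_SucE) blast
  have a_nonneg: "\<forall>i\<in>{1..n}. 0 \<le> a i" and a_mono: "mono_on {1..n} a"
    using Suc.prems(1,2) by (auto intro: mono_on_subset)
  have ei: "e i = prod a {Suc i..n}"
  proof (cases "i = n")
    case True
    then show ?thesis using hprodL_linp_monic[OF a_nonneg e] by simp
  next
    case False
    then show ?thesis using Suc.IH[OF a_nonneg a_mono e] Suc.prems(4-6) by simp
  qed
  have "0 < a l" if "l \<in> {Suc i..Suc n}" for l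
  proof -
    have "0 \<le> a i" using Suc.prems(1,4,5) by simp
    also have "a i < a (Suc i)" by (fact Suc.prems(6))
    also have "a (Suc i) \<le> a l" using that mono_onD[OF Suc.prems(2), of "Suc i" l] by simp
    finally show ?thesis .
  qed
  then have tail_pos: "0 < prod a {Suc i..n}" by (auto intro: prod_pos)
  have ax: "a i < ?x"
    using Suc.prems(5,6) mono_onD[OF Suc.prems(2), of "Suc i" "Suc n"] by simp
  have "e (i - 1) \<le> prod a {i..n}"
    using hprodL_linp_coeff_le[OF a_nonneg a_mono e, of "i - 1"] Suc.prems(4,5) by simp
  also have "\<dots> = a i * prod a {Suc i..n}"
    using Suc.prems(5) by (simp add: prod.atLeast_Suc_atMost)
  also have "\<dots> < ?x * prod a {Suc i..n}"
    using ax tail_pos by simp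
  finally have "e (i - 1) < e i * ?x" by (simp add: ei mult.commute)
  then have "f i = e i * ?x" using fi[OF Suc.prems(4)] by (simp add: mem_tplus_less)
  then show ?case using Suc.prems(5) by (simp add: ei prod.cl_ivl_Suc)
qed

lemma max_recurrence_upward_bound:
  fixes x :: real
  assumes "0 < x" and "x * u 0 \<le> b 0"
    and "\<And>i. i < N \<Longrightarrow> x * u (Suc i) = max (c (Suc i)) (u i)"
    and "\<And>i. i < N \<Longrightarrow> c (Suc i) \<le> b (Suc i)"
    and "\<And>i. i \<le> N \<Longrightarrow> b i \<le> x * b (Suc i)"
    and "i \<le> N"
  shows "u i \<le> b (Suc i)"
proof -
  have "x * u i \<le> b i" using \<open>i \<le> N\<close>
  proof (induction i)
    case (Suc i)
    then have "x * u i \<le> x * b (Suc i)"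
      using assms(5)[of i] by (meson Suc_leD order.trans)
    then have "u i \<le> b (Suc i)" using assms(1) by simp
    then show ?case using Suc.prems assms(3,4)[of i] by simp
  qed (use assms(2) in simp)
  then have "x * u i \<le> x * b (Suc i)" using assms(5,6) by (meson order.trans)
  then show ?thesis using assms(1) by simp
qed

lemma max_recurrence_downward_bound:
  fixes x :: real
  assumes "0 \<le> x" and "u M \<le> b M"
    and "\<And>i. L \<le> i \<Longrightarrow> i < M \<Longrightarrow> u i = max (c (Suc i)) (x * u (Suc i))"
    and "\<And>i. L \<le> i \<Longrightarrow> i < M \<Longrightarrow> c (Suc i) \<le> b i"
    and "\<And>i. L \<le> i \<Longrightarrow> i < M \<Longrightarrow> x * b (Suc i) \<le> b i"
    and "L \<le> i" and "i \<le> M"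
  shows "u i \<le> b i"
  using \<open>i \<le> M\<close> \<open>L \<le> i\<close>
proof (induction rule: inc_induct)
  case (step j)
  then have "x * u (Suc j) \<le> x * b (Suc j)" using assms(1) by (simp add: mult_left_mono)
  also have "\<dots> \<le> b j" using step assms(5) by simp
  finally show ?case using step assms(3,4) by simp
qed (use assms(2) in simp)

locale tropical_root_division =
  fixes n k m :: nat and c d a :: "nat \<Rightarrow> real" and av :: real
  assumes n_ge: "n \<ge> 1"
    and c_nonneg: "\<forall>i. c i \<ge> 0"
    and c_supp: "\<forall>i>n. c i = 0"
    and c_lead: "c n \<noteq> 0"
    and a_nonneg: "\<forall>i\<in>{1..n}. a i \<ge> 0"
    and a_mono: "\<forall>i j. 1 \<le> i \<longrightarrow> i \<le> j \<longrightarrow> j \<le> n \<longrightarrow> a i \<le> a j"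
    and normalized_factorization: "(\<lambda>i. c i / c n) \<in> hprodL (map (\<lambda>i. linp (a i)) [1..<Suc n])"
    and av_nz: "av \<noteq> 0"
    and k_range: "1 \<le> k" "k \<le> n"
    and m_ge: "m \<ge> 1"
    and block_le_n: "k + m - 1 \<le> n"
    and a_block: "\<forall>i. k \<le> i \<and> i \<le> k + m - 1 \<longrightarrow> a i = av"
    and left_strict: "k \<ge> 2 \<longrightarrow> a (k - 1) < a k"
    and right_strict: "k + m \<le> n \<longrightarrow> a (k + m - 1) < a (k + m)"
    and d_above: "k \<le> n - m \<longrightarrow> d (n - 1) = c n \<and>
              (\<forall>i. k + m - 1 \<le> i \<and> i \<le> n - 2 \<longrightarrow> d i = max (c (i + 1)) (av * d (i + 1)))"
    and d_below: "k \<ge> 2 \<longrightarrow> d 0 = c 0 / av \<and>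
              (\<forall>i. 1 \<le> i \<and> i \<le> k - 2 \<longrightarrow> d i = max (c i / av) (d (i - 1) / av))"
    and d_on_block: "\<forall>i. k - 1 \<le> i \<and> i \<le> k + m - 2 \<longrightarrow> d i = (\<Prod>j\<in>{i+2..n}. a j) * c n"
    and d_supp: "\<forall>i\<ge>n. d i = 0"
begin

definition tail_prod :: "nat \<Rightarrow> real" where
  "tail_prod i = prod a {Suc i..n}"

lemma lead_pos: "0 < c n"
  using c_nonneg c_lead by (simp add: less_le)

lemma a_mono_on: "mono_on {1..n} a"
  using a_mono by (auto intro: mono_onI)

lemma a_k: "a k = av"
  using a_block m_ge by simp

lemma av_pos: "0 < av"
  using a_nonneg k_range a_k av_nz by (auto simp: less_le)

lemma a_le_av: "1 \<le> l \<Longrightarrow> l \<le> k \<Longrightarrow> a l \<le> av"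
  using a_mono k_range a_k by auto

lemma av_le_a: "k \<le> l \<Longrightarrow> l \<le> n \<Longrightarrow> av \<le> a l"
  using a_mono k_range a_k by auto

lemma tail_prod_Suc: "i < n \<Longrightarrow> tail_prod i = a (Suc i) * tail_prod (Suc i)"
  by (simp add: tail_prod_def prod.atLeast_Suc_atMost)

lemma tail_prod_top: "tail_prod n = 1"
  by (simp add: tail_prod_def)

lemma tail_prod_nonneg: "0 \<le> tail_prod i"
  using a_nonneg by (auto simp: tail_prod_def intro: prod_nonneg)

lemma tail_prod_pos: "k \<le> Suc i \<Longrightarrow> 0 < tail_prod i"
  using av_le_a av_pos by (auto simp: tail_prod_def intro!: prod_pos less_le_trans[of 0 av])

lemma coeff_le_tail: "i \<le> n \<Longrightarrow> c i \<le> c n * tail_prod i"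
  using hprodL_linp_coeff_le[OF a_nonneg a_mono_on normalized_factorization] lead_pos
  by (simp add: tail_prod_def pos_divide_le_eq mult.commute)

lemma coeff_zero_tail: "c 0 = c n * tail_prod 0"
  using hprodL_linp_coeff_zero[OF a_nonneg normalized_factorization] lead_pos
  by (simp add: tail_prod_def divide_eq_eq mult.commute)

lemma coeff_eq_tail: "1 \<le> i \<Longrightarrow> i < n \<Longrightarrow> a i < a (Suc i) \<Longrightarrow> c i = c n * tail_prod i"
  using hprodL_linp_coeff_eq[OF a_nonneg a_mono_on normalized_factorization] lead_pos
  by (simp add: tail_prod_def divide_eq_eq mult.commute)

lemma d_block_tail: "k - 1 \<le> i \<Longrightarrow> i \<le> k + m - 2 \<Longrightarrow> d i = c n * tail_prod (Suc i)"
  using d_on_block by (simp add: tail_prod_def mult.commute)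

lemma d_below_rec: "2 \<le> k \<Longrightarrow> 1 \<le> i \<Longrightarrow> i \<le> k - 2 \<Longrightarrow> av * d i = max (c i) (d (i - 1))"
  using d_below av_pos by (simp add: max_mult_distrib_left)

lemma d_above_rec:
  "k + m \<le> n \<Longrightarrow> k + m - 1 \<le> i \<Longrightarrow> i < n - 1 \<Longrightarrow> d i = max (c (Suc i)) (av * d (Suc i))"
  using d_above by simp

lemma d_below_bound:
  assumes "2 \<le> k" and "i \<le> k - 2"
  shows "d i \<le> c n * tail_prod (Suc i)"
proof (rule max_recurrence_upward_bound[OF av_pos _ _ _ _ assms(2), where c = c])
  show "av * d 0 \<le> c n * tail_prod 0"
    using d_below assms(1) av_pos coeff_zero_tail by simp
  show "av * d (Suc j) = max (c (Suc j)) (d j)" if "j < k - 2" for j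
    using d_below_rec[of "Suc j"] that by simp
  show "c (Suc j) \<le> c n * tail_prod (Suc j)" if "j < k - 2" for j
    using coeff_le_tail that k_range by simp
  show "c n * tail_prod j \<le> av * (c n * tail_prod (Suc j))" if "j \<le> k - 2" for j
    using tail_prod_Suc[of j] a_le_av[of "Suc j"] that k_range lead_pos tail_prod_nonneg[of "Suc j"]
    by (simp add: mult_right_mono mult.left_commute)
qed

lemma d_above_bound:
  assumes "k + m \<le> n" and "k + m - 1 \<le> i" and "i \<le> n - 1"
  shows "d i \<le> c n * tail_prod (Suc i)"
proof (rule max_recurrence_downward_bound[OF less_imp_le[OF av_pos] _ _ _ _ assms(2,3), where c = c])
  show "d (n - 1) \<le> c n * tail_prod (Suc (n - 1))"
    using d_above assms(1) n_ge tail_prod_top by simp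
  show "d j = max (c (Suc j)) (av * d (Suc j))" if "k + m - 1 \<le> j" "j < n - 1" for j
    using d_above_rec assms(1) that by simp
  show "c (Suc j) \<le> c n * tail_prod (Suc j)" if "j < n - 1" for j
    using coeff_le_tail that by simp
  show "av * (c n * tail_prod (Suc (Suc j))) \<le> c n * tail_prod (Suc j)"
    if "k + m - 1 \<le> j" "j < n - 1" for j
    using tail_prod_Suc[of "Suc j"] av_le_a[of "Suc (Suc j)"] that lead_pos
      tail_prod_nonneg[of "Suc (Suc j)"]
    by (simp add: mult_right_mono mult.left_commute)
qed

lemma d_nonneg: "0 \<le> d i"
proof -
  consider "n \<le> i" | "k - 1 \<le> i" "i \<le> k + m - 2" | "i < k - 1" | "k + m - 1 \<le> i" "i < n"
    by linarith
  then show ?thesis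
  proof cases
    case 1
    then show ?thesis using d_supp by simp
  next
    case 2
    then show ?thesis using d_block_tail lead_pos tail_prod_nonneg by simp
  next
    case 3
    show ?thesis
    proof (cases i)
      case 0
      with 3 show ?thesis using d_below c_nonneg av_pos by simp
    next
      case (Suc j)
      with 3 have "av * d i = max (c i) (d j)" using d_below_rec[of i] by simp
      then have "0 \<le> av * d i" using c_nonneg by (metis max.coboundedI1)
      then show ?thesis using av_pos by (simp add: zero_le_mult_iff)
    qed
  next
    case 4
    then show ?thesis
      using d_above c_nonneg lead_pos by (cases "i = n - 1") (auto intro: le_max_iff_disj[THEN iffD2])
  qed
qed

lemma coeff_factor_below:
  assumes "1 \<le> i" and "i < k - 1"
  shows "c i \<in> tplus (av * d i) (d (i - 1))"
proof -
  have "av * d i = max (c i) (d (i - 1))" using d_below_rec assms by simp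
  then show ?thesis using mem_tplus_max_left c_nonneg d_nonneg by simp
qed

lemma coeff_factor_left_edge:
  assumes "2 \<le> k"
  shows "c (k - 1) \<in> tplus (av * d (k - 1)) (d (k - 2))"
proof -
  have c_edge: "c (k - 1) = c n * tail_prod (k - 1)"
    using coeff_eq_tail[of "k - 1"] assms k_range left_strict by simp
  have "av * d (k - 1) = c (k - 1)"
    using d_block_tail[of "k - 1"] tail_prod_Suc[of "k - 1"] c_edge assms k_range m_ge a_k
    by simp
  moreover have "d (k - 2) \<le> c (k - 1)"
    using d_below_bound[of "k - 2"] c_edge assms by (simp add: Suc_diff_Suc numeral_2_eq_2)
  ultimately show ?thesis using d_nonneg by (simp add: mem_tplus_dominant)
qed

lemma coeff_factor_block:
  assumes "k \<le> i" and "i \<le> k + m - 2"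
  shows "c i \<in> tplus (av * d i) (d (i - 1))"
proof -
  have "a (Suc i) = av" using a_block assms k_range m_ge by force
  then have "av * d i = c n * (a (Suc i) * tail_prod (Suc i))"
    using d_block_tail[of i] assms by simp
  also have "\<dots> = d (i - 1)"
    using d_block_tail[of "i - 1"] tail_prod_Suc[of i] assms k_range block_le_n by simp
  finally have "av * d i = d (i - 1)" .
  moreover have "c i \<le> d (i - 1)"
    using coeff_le_tail[of i] d_block_tail[of "i - 1"] assms k_range block_le_n by simp
  ultimately show ?thesis using c_nonneg by (simp add: mem_tplus_same)
qed

lemma coeff_factor_right_edge:
  assumes "k + m \<le> n"
  shows "c (k + m - 1) \<in> tplus (av * d (k + m - 1)) (d (k + m - 2))"
proof -
  let ?i = "k + m - 1"
  have a_i: "a ?i = av" and a_Suc_i: "av < a (Suc ?i)"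
    using a_block right_strict assms k_range m_ge by (auto simp: Suc_diff_le)
  have c_i: "c ?i = c n * (a (Suc ?i) * tail_prod (Suc ?i))"
    using coeff_eq_tail[of ?i] tail_prod_Suc[of ?i] a_i a_Suc_i assms k_range m_ge by simp
  have "av * d ?i \<le> av * (c n * tail_prod (Suc ?i))"
    using d_above_bound[of ?i] assms av_pos by simp
  also have "\<dots> < a (Suc ?i) * (c n * tail_prod (Suc ?i))"
    using a_Suc_i lead_pos tail_prod_pos[of "Suc ?i"] by simp
  finally have "av * d ?i < c ?i" using c_i by (simp add: mult.left_commute)
  moreover have "d (k + m - 2) = c ?i"
    using d_block_tail[of "k + m - 2"] c_i tail_prod_Suc[of ?i] assms k_range m_ge
    by (simp add: Suc_diff_Suc numeral_2_eq_2)
  ultimately show ?thesis by (simp add: mem_tplus_less)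
qed

lemma coeff_factor_above:
  assumes "k + m \<le> i" and "i \<le> n - 1"
  shows "c i \<in> tplus (av * d i) (d (i - 1))"
proof -
  have "d (i - 1) = max (c i) (av * d i)"
    using d_above_rec[of "i - 1"] assms m_ge by simp
  then show ?thesis using mem_tplus_max_right c_nonneg d_nonneg av_pos by simp
qed

lemma coeff_factor:
  assumes "1 \<le> i" and "i \<le> n - 1"
  shows "c i \<in> tplus (av * d i) (d (i - 1))"
proof -
  consider "i < k - 1" | "i = k - 1" | "k \<le> i" "i \<le> k + m - 2" | "i = k + m - 1" | "k + m \<le> i"
    by linarith
  then show ?thesis
  proof cases
    case 2
    then show ?thesis using coeff_factor_left_edge assms by (simp add: numeral_2_eq_2)
  next
    case 4
    moreover have "i - 1 = k + m - 2" using 4 by simp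
    ultimately show ?thesis using coeff_factor_right_edge assms by simp
  qed (use assms coeff_factor_below coeff_factor_block coeff_factor_above in auto)
qed

lemma const_coeff_factor: "c 0 = av * d 0"
proof (cases "2 \<le> k")
  case True
  then show ?thesis using d_below av_pos by simp
next
  case False
  then have "k = 1" using k_range by simp
  then show ?thesis
    using coeff_zero_tail d_block_tail[of 0] tail_prod_Suc[of 0] a_k n_ge by simp
qed

lemma lead_coeff_factor: "c n = d (n - 1)"
proof (cases "k + m \<le> n")
  case True
  then show ?thesis using d_above by simp
next
  case False
  then show ?thesis using d_block_tail[of "n - 1"] tail_prod_top k_range block_le_n n_ge by simp
qed

lemma factorization: "c \<in> hmul (linp av) d"
  unfolding hmul_linp_left_iff[OF less_imp_le[OF av_pos] d_nonneg]
proof (intro conjI allI impI)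
  show "c 0 = av * d 0" by (fact const_coeff_factor)
  fix i :: nat assume "1 \<le> i"
  consider "i \<le> n - 1" | "i = n" | "n < i" by linarith
  then show "c i \<in> tplus (av * d i) (d (i - 1))"
  proof cases
    case 1
    then show ?thesis using coeff_factor \<open>1 \<le> i\<close> by simp
  next
    case 2
    then show ?thesis using d_supp lead_coeff_factor lead_pos by (simp add: tplus_zero_left)
  next
    case 3
    then show ?thesis using d_supp c_supp by (simp add: tplus_def)
  qed
qed

end

theorem mainTheorem6:
  fixes n k m :: nat and c d a :: "nat \<Rightarrow> real" and av :: real
  assumes n_ge: "n \<ge> 1"
    and c_nonneg: "\<forall>i. c i \<ge> 0"
    and c_supp: "\<forall>i>n. c i = 0"
    and c_lead: "c n \<noteq> 0"
    and a_nonneg: "\<forall>i\<in>{1..n}. a i \<ge> 0"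
    and a_mono: "\<forall>i j. 1 \<le> i \<longrightarrow> i \<le> j \<longrightarrow> j \<le> n \<longrightarrow> a i \<le> a j"
    and fact: "(\<lambda>i. c i / c n) \<in> hprodL (map (\<lambda>i. linp (a i)) [1..<Suc n])"
    and av_nz: "av \<noteq> 0"
    and k_range: "1 \<le> k" "k \<le> n"
    and m_ge: "m \<ge> 1"
    and km: "k + m - 1 \<le> n"
    and block: "\<forall>i. k \<le> i \<and> i \<le> k + m - 1 \<longrightarrow> a i = av"
    and left_strict: "k \<ge> 2 \<longrightarrow> a (k - 1) < a k"
    and right_strict: "k + m \<le> n \<longrightarrow> a (k + m - 1) < a (k + m)"
    and d1: "k \<le> n - m \<longrightarrow> d (n - 1) = c n \<and>
              (\<forall>i. k + m - 1 \<le> i \<and> i \<le> n - 2 \<longrightarrow> d i = max (c (i + 1)) (av * d (i + 1)))"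
    and d2: "k \<ge> 2 \<longrightarrow> d 0 = c 0 / av \<and>
              (\<forall>i. 1 \<le> i \<and> i \<le> k - 2 \<longrightarrow> d i = max (c i / av) (d (i - 1) / av))"
    and d3: "\<forall>i. k - 1 \<le> i \<and> i \<le> k + m - 2 \<longrightarrow> d i = (\<Prod>j\<in>{i+2..n}. a j) * c n"
    and d_supp: "\<forall>i\<ge>n. d i = 0"
  shows "c \<in> hmul (linp av) d \<and>
         c n = d (n - 1) \<and> c 0 = av * d 0 \<and>
         (\<forall>i. 1 \<le> i \<and> i \<le> n - 1 \<longrightarrow> c i \<in> tplus (av * d i) (d (i - 1)))"
proof -
  interpret tropical_root_division n k m c d a av
    by (rule tropical_root_division.intro) (fact assms)+
  show ?thesis
    using factorization lead_coeff_factor const_coeff_factor coeff_factor by blast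
qed

end
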